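(* Let $k\ge 1$, let $\pi$ be an input permutation for the $\mathfrak{D}^k\mathfrak{I}$ machine, and let $a<b<c$ be entries of $\pi$. Consider any sequence of legal operations applied to $\pi$, and consider the moment when $b$ is pushed into the increasing stack $I$. If at that moment any of the following holds: (1) $c$ is in $D_j$ and $a$ is in $D_l$ for some $l\le j$; (2) $c$ is in $D_j$ for some $j$, and $a$ is still in the input; (3) $c$ and $a$ are both still in the input, with $a$ following $c$ in $\pi$; then this sequence of operations does not produce the identity permutation as output (i.e. $\pi$ is not sorted by it).
   Context: The $\mathfrak{D}^k\mathfrak{I}$ machine consists of $k$ stacks $D_1,\dots,D_k$ (called decreasing stacks) followed in series by a stack $I$ (the increasing stack). The input permutation is read from left to right. At every moment the elements of each $D_i$ must be in decreasing order from top to bottom (the top element is the largest), and the elements of $I$ must be in increasing order from top to bottom (the top element is the smallest). The operations are: $d_0$: push the next element of the input into $D_1$; $d_i$ ($1\le i\le k-1$): pop the top of $D_i$ and push it into $D_{i+1}$; $d_k$: pop the top of $D_k$ and push it into $I$; $d_{k+1}$: pop the top of $I$ and append it to the right of the output. An operation is legal if it does not violate the order restrictions of the stacks; $d_{k+1}$ is considered legal if the popped element is the smallest among the elements not yet output, and also if no other operation is legal. The permutation is sorted by a sequence of operations if all its elements end in the output in increasing order. *)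

theory Defs
  imports Main
begin

text \<open>Configuration of the D^k I machine.  Stacks are lists whose head is the top.
  The decreasing stacks D_1..D_k are stored in the list dstk, D_i = dstk ! (i-1).\<close>

record mstate =
  inp  :: "nat list"
  dstk :: "nat list list"
  istk :: "nat list"
  outp :: "nat list"

definition init_state :: "nat \<Rightarrow> nat list \<Rightarrow> mstate" where
  "init_state k \<pi> = \<lparr>inp = \<pi>, dstk = replicate k [], istk = [], outp = []\<rparr>"

definition basic_step :: "nat \<Rightarrow> nat \<Rightarrow> mstate \<Rightarrow> mstate option" where
  "basic_step k i s =
    (if i = 0 then
       (case inp s of [] \<Rightarrow> None
        | x # rest \<Rightarrow>
            (let D1 = dstk s ! 0 in
             if D1 = [] \<or> hd D1 < x
             then Some (s\<lparr>inp := rest, dstk := (dstk s)[0 := x # D1]\<rparr>) else None))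
     else if i < k then
       (case dstk s ! (i - 1) of [] \<Rightarrow> None
        | x # rest \<Rightarrow>
            (let Dn = dstk s ! i in
             if Dn = [] \<or> hd Dn < x
             then Some (s\<lparr>dstk := ((dstk s)[i - 1 := rest])[i := x # Dn]\<rparr>) else None))
     else if i = k then
       (case dstk s ! (k - 1) of [] \<Rightarrow> None
        | x # rest \<Rightarrow>
            (if istk s = [] \<or> x < hd (istk s)
             then Some (s\<lparr>dstk := (dstk s)[k - 1 := rest], istk := x # istk s\<rparr>) else None))
     else None)"

definition remaining :: "mstate \<Rightarrow> nat set" where
  "remaining s = set (inp s) \<union> (\<Union>D\<in>set (dstk s). set D) \<union> set (istk s)"

text \<open>All operations d_0 .. d_{k+1} with the legality rule of the paper:
  d_{k+1} is legal if the popped element is the smallest not yet output,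
  or if no other operation is legal.\<close>
definition step :: "nat \<Rightarrow> nat \<Rightarrow> mstate \<Rightarrow> mstate option" where
  "step k i s =
    (if i \<le> k then basic_step k i s
     else if i = k + 1 then
       (case istk s of [] \<Rightarrow> None
        | x # rest \<Rightarrow>
            (if x = Min (remaining s) \<or> (\<forall>j\<le>k. basic_step k j s = None)
             then Some (s\<lparr>istk := rest, outp := outp s @ [x]\<rparr>) else None))
     else None)"

fun run :: "nat \<Rightarrow> nat list \<Rightarrow> mstate \<Rightarrow> mstate option" where
  "run k [] s = Some s"
| "run k (i # ops) s = (case step k i s of None \<Rightarrow> None | Some s' \<Rightarrow> run k ops s')"

end

theory Submission
  imports Defs "HOL-Library.Multiset"
begin

text \<open>Read the elements still in D_k, ..., D_1 (each from top to bottom) followed by the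
  input as one list, the pipeline: the order in which elements can reach I. The operations
  d_0, ..., d_(k-1) let one element jump forward over a block of smaller ones, d_k removes
  the head of the pipeline and d_(k+1) leaves it alone. Each of the three hypotheses says
  that c precedes a in the pipeline, and since a < c no jump can reverse this. While b sits
  in I, the element c > b cannot enter I, so a stays behind c in the pipeline; hence b is
  output before a.\<close>

definition precedes :: "'a \<Rightarrow> 'a \<Rightarrow> 'a list \<Rightarrow> bool" where
  "precedes x y xs \<longleftrightarrow> (\<exists>u v w. xs = u @ x # v @ y # w)"

lemma precedes_Nil [simp]: "\<not> precedes x y []"
  by (simp add: precedes_def)

lemma precedes_Cons [simp]:
  "precedes x y (z # zs) \<longleftrightarrow> z = x \<and> y \<in> set zs \<or> precedes x y zs"
proof
  assume "precedes x y (z # zs)"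
  then obtain u v w where "z # zs = u @ x # v @ y # w"
    unfolding precedes_def by blast
  then show "z = x \<and> y \<in> set zs \<or> precedes x y zs"
    by (cases u) (auto simp: precedes_def)
next
  assume "z = x \<and> y \<in> set zs \<or> precedes x y zs"
  then show "precedes x y (z # zs)"
    unfolding precedes_def by (metis append_Cons append_Nil split_list)
qed

lemma precedes_append [simp]:
  "precedes x y (xs @ ys) \<longleftrightarrow> precedes x y xs \<or> x \<in> set xs \<and> y \<in> set ys \<or> precedes x y ys"
  by (induction xs) auto

lemma precedes_setD: "precedes x y xs \<Longrightarrow> x \<in> set xs \<and> y \<in> set xs"
  by (auto simp: precedes_def)

lemma precedes_jump:
  fixes x a c :: "'a::order"
  assumes "\<forall>z\<in>set v. z < x" "a < c" "precedes c a (u @ v @ x # w)"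
  shows "precedes c a (u @ x # v @ w)"
  using assms by (auto dest: precedes_setD)

lemma precedes_sorted:
  fixes a c :: "'a::order"
  shows "sorted_wrt (>) xs \<Longrightarrow> a < c \<Longrightarrow> c \<in> set xs \<Longrightarrow> a \<in> set xs \<Longrightarrow> precedes c a xs"
  by (induction xs) auto

lemma precedes_nth:
  assumes "i < j" "j < length xs"
  shows "precedes (xs ! i) (xs ! j) xs"
proof -
  have "xs = take j xs @ xs ! j # drop (Suc j) xs"
    using assms(2) by (rule id_take_nth_drop)
  moreover have "xs ! i \<in> set (take j xs)"
    using assms by (metis in_set_conv_nth length_take min.absorb4 nth_take)
  ultimately show ?thesis
    by (metis precedes_append list.set_intros(1))
qed

lemma precedes_concat:
  assumes "p \<le> q" "q < length xss" "x \<in> set (xss ! p)" "y \<in> set (xss ! q)"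
    and "p = q \<Longrightarrow> precedes x y (xss ! q)"
  shows "precedes x y (concat xss)"
proof -
  have "xss = take q xss @ xss ! q # drop (Suc q) xss"
    using assms(2) by (rule id_take_nth_drop)
  then have split: "concat xss = concat (take q xss) @ xss ! q @ concat (drop (Suc q) xss)"
    by (metis concat.simps(2) concat_append)
  show ?thesis
  proof (cases "p = q")
    case False
    then have "xss ! p \<in> set (take q xss)"
      using assms(1,2) by (metis in_set_conv_nth le_neq_implies_less length_take min.absorb4 nth_take)
    then have "x \<in> set (concat (take q xss))"
      using assms(3) by auto
    then show ?thesis
      using assms(4) split by simp
  qed (use assms(5) split in simp)
qed

lemma sorted_wrt_gt_ConsI:
  "sorted_wrt (>) xs \<Longrightarrow> xs = [] \<or> hd xs < x \<Longrightarrow> sorted_wrt (>) (x # xs)"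
  for x :: "'a::order"
  by (cases xs) auto

lemma ball_set_list_update:
  "\<forall>x\<in>set xs. P x \<Longrightarrow> (i < length xs \<Longrightarrow> P y) \<Longrightarrow> \<forall>x\<in>set (xs[i := y]). P x"
  using set_update_subset_insert[of xs i y] by (cases "i < length xs") (auto simp: list_update_beyond)

lemma step_SomeE:
  assumes "step k i s = Some s'"
  obtains (push) x rest where "i = 0" "inp s = x # rest" "dstk s ! 0 = [] \<or> hd (dstk s ! 0) < x"
    "s' = s\<lparr>inp := rest, dstk := (dstk s)[0 := x # dstk s ! 0]\<rparr>"
  | (move) x rest where "0 < i" "i < k" "dstk s ! (i - 1) = x # rest" "dstk s ! i = [] \<or> hd (dstk s ! i) < x"
    "s' = s\<lparr>dstk := (dstk s)[i - 1 := rest, i := x # dstk s ! i]\<rparr>"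
  | (enter) x rest where "i = k" "0 < k" "dstk s ! (k - 1) = x # rest" "istk s = [] \<or> x < hd (istk s)"
    "s' = s\<lparr>dstk := (dstk s)[k - 1 := rest], istk := x # istk s\<rparr>"
  | (pop) x rest where "i = Suc k" "istk s = x # rest" "s' = s\<lparr>istk := rest, outp := outp s @ [x]\<rparr>"
  using assms unfolding step_def basic_step_def
  by (auto simp: Let_def split: if_splits list.splits)

lemma run_append:
  "run k (ops @ ops') s = (case run k ops s of None \<Rightarrow> None | Some t \<Rightarrow> run k ops' t)"
  by (induction ops arbitrary: s) (auto split: option.splits)

lemma run_invariant:
  assumes "run k ops s = Some s'" "P s" "\<And>i t t'. step k i t = Some t' \<Longrightarrow> P t \<Longrightarrow> P t'"
  shows "P s'"
  using assms(1,2) by (induction ops arbitrary: s) (auto split: option.splits intro: assms(3))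

lemma step_length_dstk: "step k i s = Some s' \<Longrightarrow> length (dstk s') = length (dstk s)"
  by (erule step_SomeE) auto

lemma step_inp: "step k i s = Some s' \<Longrightarrow> inp s' = inp s \<or> inp s' = tl (inp s)"
  by (erule step_SomeE) auto

lemma step_outp: "step k i s = Some s' \<Longrightarrow> \<exists>zs. outp s' = outp s @ zs"
  by (erule step_SomeE) auto

definition sorted_stacks :: "mstate \<Rightarrow> bool" where
  "sorted_stacks s \<longleftrightarrow> (\<forall>D\<in>set (dstk s). sorted_wrt (>) D) \<and> sorted_wrt (<) (istk s)"

lemma step_sorted_stacks:
  assumes "step k i s = Some s'" "sorted_stacks s"
  shows "sorted_stacks s'"
proof -
  have D: "\<forall>D\<in>set (dstk s). sorted_wrt (>) D" and I: "sorted_wrt (<) (istk s)"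
    using assms(2) by (auto simp: sorted_stacks_def)
  have tail: "sorted_wrt (>) rest" if "dstk s ! j = x # rest" "j < length (dstk s)" for j x rest
    using D nth_mem[OF that(2)] that(1) by auto
  from assms(1) show ?thesis
  proof (cases rule: step_SomeE)
    case (push x rest)
    have "\<forall>D\<in>set ((dstk s)[0 := x # dstk s ! 0]). sorted_wrt (>) D"
      using push(3) D by (intro ball_set_list_update sorted_wrt_gt_ConsI) auto
    then show ?thesis
      using push(4) I by (simp add: sorted_stacks_def)
  next
    case (move x rest)
    have "\<forall>D\<in>set ((dstk s)[i - 1 := rest, i := x # dstk s ! i]). sorted_wrt (>) D"
      using move(3,4) D tail by (intro ball_set_list_update sorted_wrt_gt_ConsI) auto
    then show ?thesis
      using move(5) I by (simp add: sorted_stacks_def)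
  next
    case (enter x rest)
    have "\<forall>D\<in>set ((dstk s)[k - 1 := rest]). sorted_wrt (>) D"
      using enter(3) D tail by (intro ball_set_list_update) auto
    moreover have "sorted_wrt (<) (x # istk s)"
      using enter(4) I by (cases "istk s") auto
    ultimately show ?thesis
      using enter(5) by (simp add: sorted_stacks_def)
  next
    case (pop x rest)
    then show ?thesis using I D by (simp add: sorted_stacks_def)
  qed
qed

definition pipeline :: "mstate \<Rightarrow> nat list" where
  "pipeline s = concat (rev (dstk s)) @ inp s"

lemma step_pipelineE:
  assumes "step k i s = Some s'" "length (dstk s) = k" "0 < k" "sorted_stacks s"
  obtains (jump) u v x w where "i < k" "pipeline s = u @ v @ x # w" "pipeline s' = u @ x # v @ w"
    "\<forall>y\<in>set v. y < x" "istk s' = istk s" "outp s' = outp s"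
  | (enter) x where "i = k" "hd (dstk s ! (k - 1)) = x" "pipeline s = x # pipeline s'"
    "istk s' = x # istk s" "istk s = [] \<or> x < hd (istk s)" "outp s' = outp s"
  | (pop) x where "i = Suc k" "istk s = x # istk s'" "outp s' = outp s @ [x]" "pipeline s' = pipeline s"
proof -
  have D: "\<forall>D\<in>set (dstk s). sorted_wrt (>) D"
    using assms(4) by (simp add: sorted_stacks_def)
  from assms(1) show thesis
  proof (cases rule: step_SomeE)
    case (push x rest)
    obtain D ds where ds: "dstk s = D # ds"
      using assms(2,3) by (cases "dstk s") auto
    have "\<forall>y\<in>set D. y < x"
      using sorted_wrt_gt_ConsI[of D x] push(3) D ds by auto
    then show thesis
      using push(1,2,4) ds assms(3)
      by (intro jump[of "concat (rev ds)" D x rest]) (simp_all add: pipeline_def)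
  next
    case (move x rest)
    define p where "p = take (i - 1) (dstk s)"
    define q where "q = drop (Suc i) (dstk s)"
    define E where "E = dstk s ! i"
    have ds: "dstk s = p @ (x # rest) # E # q"
      using move(1-3) assms(2) unfolding p_def q_def E_def
      by (metis Cons_nth_drop_Suc Suc_pred' append_take_drop_id less_imp_diff_less)
    have i: "i = Suc (length p)"
      using move(1,2) assms(2) by (simp add: p_def)
    have "\<forall>y\<in>set E. y < x"
      using sorted_wrt_gt_ConsI[of E x] move(2,4) D assms(2) unfolding E_def by auto
    then show thesis
      using move(2,5) ds i unfolding E_def[symmetric]
      by (intro jump[of "concat (rev q)" E x "rest @ concat (rev p) @ inp s"])
        (simp_all add: pipeline_def list_update_append nth_append)
  next
    case (enter x rest)
    define p where "p = butlast (dstk s)"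
    have ds: "dstk s = p @ [x # rest]"
      using enter(3) assms(2,3) unfolding p_def
      by (metis append_butlast_last_id last_conv_nth length_greater_0_conv)
    have k: "k = Suc (length p)"
      using assms(2,3) by (simp add: p_def)
    show thesis
      using enter(1,3-5) ds k by (intro that(2)[of x]) (simp_all add: pipeline_def)
  next
    case (pop x rest)
    then show thesis by (intro that(3)[of x]) (simp_all add: pipeline_def)
  qed
qed

definition wf_state :: "nat \<Rightarrow> nat list \<Rightarrow> mstate \<Rightarrow> bool" where
  "wf_state k \<pi> s \<longleftrightarrow> length (dstk s) = k \<and> sorted_stacks s
     \<and> mset (pipeline s @ istk s @ outp s) = mset \<pi> \<and> (\<exists>m. inp s = drop m \<pi>)"

lemma wf_state_init: "wf_state k \<pi> (init_state k \<pi>)"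
  by (auto simp: wf_state_def init_state_def pipeline_def sorted_stacks_def intro: exI[of _ 0])

lemma wf_state_step:
  assumes "step k i s = Some s'" "0 < k" "wf_state k \<pi> s"
  shows "wf_state k \<pi> s'"
proof -
  have len: "length (dstk s) = k" and sorted: "sorted_stacks s"
    using assms(3) by (simp_all add: wf_state_def)
  have "mset (pipeline s' @ istk s' @ outp s') = mset (pipeline s @ istk s @ outp s)"
    using assms(1) len assms(2) sorted by (cases rule: step_pipelineE) simp_all
  moreover obtain m where "inp s = drop m \<pi>"
    using assms(3) by (auto simp: wf_state_def)
  then have "\<exists>m. inp s' = drop m \<pi>"
    using step_inp[OF assms(1)] by (metis drop_Suc tl_drop)
  ultimately show ?thesis
    using assms(3) step_length_dstk[OF assms(1)] step_sorted_stacks[OF assms(1) sorted]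
    by (simp add: wf_state_def)
qed

lemma wf_state_distinct:
  "wf_state k \<pi> s \<Longrightarrow> distinct \<pi> \<Longrightarrow> distinct (pipeline s @ istk s @ outp s)"
  unfolding wf_state_def by (metis mset_eq_imp_distinct_iff)

lemma precedes_pipeline_stacks:
  assumes "wf_state k \<pi> s" "a < c" "1 \<le> l" "l \<le> j" "j \<le> k"
    and "c \<in> set (dstk s ! (j - 1))" "a \<in> set (dstk s ! (l - 1))"
  shows "precedes c a (pipeline s)"
proof -
  have len: "length (dstk s) = k" and D: "\<forall>D\<in>set (dstk s). sorted_wrt (>) D"
    using assms(1) by (simp_all add: wf_state_def sorted_stacks_def)
  have rev: "rev (dstk s) ! (k - i) = dstk s ! (i - 1)" if "1 \<le> i" "i \<le> k" for i
    using that len by (simp add: rev_nth Suc_diff_Suc)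
  have "precedes c a (concat (rev (dstk s)))"
  proof (rule precedes_concat[of "k - j" "k - l"])
    assume "k - j = k - l"
    then have "l = j"
      using assms(3-5) by simp
    then show "precedes c a (rev (dstk s) ! (k - l))"
      using assms(2-7) D len rev by (auto intro!: precedes_sorted)
  qed (use assms(3-7) len rev in auto)
  then show ?thesis
    by (simp add: pipeline_def)
qed

lemma precedes_pipeline_input:
  "j < length (dstk s) \<Longrightarrow> c \<in> set (dstk s ! j) \<Longrightarrow> a \<in> set (inp s) \<Longrightarrow> precedes c a (pipeline s)"
  by (auto simp: pipeline_def)

lemma precedes_pipeline_input_order:
  assumes "wf_state k \<pi> s" "distinct \<pi>" "precedes c a \<pi>" "c \<in> set (inp s)"
  shows "precedes c a (pipeline s)"
proof -
  obtain m where m: "inp s = drop m \<pi>"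
    using assms(1) by (auto simp: wf_state_def)
  then have "c \<notin> set (take m \<pi>)"
    using assms(2,4) set_take_disj_set_drop_if_distinct by fastforce
  then have "precedes c a (drop m \<pi>)"
    using assms(3) append_take_drop_id[of m \<pi>] precedes_append[of c a "take m \<pi>" "drop m \<pi>"]
    by (auto dest: precedes_setD)
  then show ?thesis
    by (simp add: pipeline_def m)
qed

lemma precedes_pipeline_cases:
  assumes "wf_state k \<pi> s" "distinct \<pi>" "a < c"
    and "(\<exists>j l. 1 \<le> l \<and> l \<le> j \<and> j \<le> k \<and> c \<in> set (dstk s ! (j - 1)) \<and> a \<in> set (dstk s ! (l - 1)))
       \<or> (\<exists>j. 1 \<le> j \<and> j \<le> k \<and> c \<in> set (dstk s ! (j - 1)) \<and> a \<in> set (inp s))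
       \<or> (c \<in> set (inp s) \<and> a \<in> set (inp s) \<and>
          (\<exists>i j. i < j \<and> j < length \<pi> \<and> \<pi> ! i = c \<and> \<pi> ! j = a))"
  shows "precedes c a (pipeline s)"
proof -
  have len: "length (dstk s) = k"
    using assms(1) by (simp add: wf_state_def)
  from assms(4) show ?thesis
  proof (elim disjE exE conjE)
    fix j l assume "1 \<le> l" "l \<le> j" "j \<le> k" "c \<in> set (dstk s ! (j - 1))" "a \<in> set (dstk s ! (l - 1))"
    then show ?thesis
      using precedes_pipeline_stacks[OF assms(1,3)] by simp
  next
    fix j assume "1 \<le> j" "j \<le> k" "c \<in> set (dstk s ! (j - 1))" "a \<in> set (inp s)"
    then show ?thesis
      using precedes_pipeline_input[of "j - 1"] len by simp
  next
    fix i j assume "c \<in> set (inp s)" "a \<in> set (inp s)" "i < j" "j < length \<pi>" "\<pi> ! i = c" "\<pi> ! j = a"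
    then show ?thesis
      using precedes_pipeline_input_order[OF assms(1,2)] precedes_nth[of i j \<pi>] by simp
  qed
qed

definition b_ahead_of_a :: "nat \<Rightarrow> nat \<Rightarrow> nat \<Rightarrow> mstate \<Rightarrow> bool" where
  "b_ahead_of_a a b c s \<longleftrightarrow> b \<in> set (istk s) \<and> precedes c a (pipeline s)
     \<or> (\<exists>xs ys. outp s = xs @ b # ys \<and> a \<notin> set xs)"

lemma b_ahead_of_a_step:
  assumes "step k i s = Some s'" "0 < k" "wf_state k \<pi> s" "distinct \<pi>" "a < b" "b < c"
    and "b_ahead_of_a a b c s"
  shows "b_ahead_of_a a b c s'"
proof (cases "\<exists>xs ys. outp s = xs @ b # ys \<and> a \<notin> set xs")
  case True
  then obtain xs ys where "outp s = xs @ b # ys" "a \<notin> set xs"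
    by blast
  moreover obtain zs where "outp s' = outp s @ zs"
    using step_outp[OF assms(1)] by blast
  ultimately show ?thesis
    unfolding b_ahead_of_a_def by auto
next
  case False
  then have b: "b \<in> set (istk s)" and ca: "precedes c a (pipeline s)"
    using assms(7) by (auto simp: b_ahead_of_a_def)
  have len: "length (dstk s) = k" and sorted: "sorted_stacks s"
    using assms(3) by (simp_all add: wf_state_def)
  from assms(1) len assms(2) sorted show ?thesis
  proof (cases rule: step_pipelineE)
    case (jump u v x w)
    then show ?thesis
      using b ca assms(5,6) precedes_jump[of v x a c u w] by (simp add: b_ahead_of_a_def)
  next
    case (enter x)
    have "hd (istk s) \<le> b"
      using b sorted by (cases "istk s") (auto simp: sorted_stacks_def)
    then have "x \<noteq> c"
      using enter(5) b assms(6) by auto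
    then show ?thesis
      using enter(3,4) b ca by (simp add: b_ahead_of_a_def)
  next
    case (pop x)
    show ?thesis
    proof (cases "x = b")
      case True
      have "a \<notin> set (outp s)"
        using wf_state_distinct[OF assms(3,4)] precedes_setD[OF ca] by auto
      then show ?thesis
        using pop(3) True by (auto simp: b_ahead_of_a_def)
    next
      case False
      then show ?thesis
        using pop(2,4) b ca by (auto simp: b_ahead_of_a_def)
    qed
  qed
qed

lemma b_ahead_of_a_enter:
  assumes "step k k s = Some s'" "0 < k" "wf_state k \<pi> s"
    and "hd (dstk s ! (k - 1)) = b" "b \<noteq> c" "precedes c a (pipeline s)"
  shows "b_ahead_of_a a b c s'"
proof -
  have len: "length (dstk s) = k" and sorted: "sorted_stacks s"
    using assms(3) by (simp_all add: wf_state_def)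
  from assms(1) len assms(2) sorted show ?thesis
  proof (cases rule: step_pipelineE)
    case (enter x)
    then show ?thesis
      using assms(4-6) by (simp add: b_ahead_of_a_def)
  qed simp_all
qed

lemma b_ahead_of_a_unsorted:
  assumes "wf_state k \<pi> s" "distinct \<pi>" "b_ahead_of_a a b c s" "a < b" "a \<in> set (outp s)"
  shows "\<not> sorted (outp s)"
proof
  assume sorted: "sorted (outp s)"
  have "a \<notin> set (pipeline s)"
    using wf_state_distinct[OF assms(1,2)] assms(5) by auto
  then obtain xs ys where out: "outp s = xs @ b # ys" and "a \<notin> set xs"
    using assms(3) by (auto simp: b_ahead_of_a_def dest: precedes_setD)
  then have "a \<in> set ys"
    using assms(4,5) by auto
  then show False
    using sorted assms(4) unfolding out by (auto simp: sorted_append)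
qed

theorem mainTheorem2:
  fixes k :: nat and \<pi> :: "nat list" and a b c :: nat
    and ops1 ops2 :: "nat list" and s sf :: mstate
  assumes "k \<ge> 1"
    and "distinct \<pi>" and "set \<pi> = {1..length \<pi>}"
    and "a \<in> set \<pi>" and "b \<in> set \<pi>" and "c \<in> set \<pi>"
    and "a < b" and "b < c"
    and "run k ops1 (init_state k \<pi>) = Some s"
    and "dstk s ! (k - 1) \<noteq> []" and "hd (dstk s ! (k - 1)) = b"
    and "run k (ops1 @ k # ops2) (init_state k \<pi>) = Some sf"
    and "(\<exists>j l. 1 \<le> l \<and> l \<le> j \<and> j \<le> k \<and> c \<in> set (dstk s ! (j - 1)) \<and> a \<in> set (dstk s ! (l - 1)))
       \<or> (\<exists>j. 1 \<le> j \<and> j \<le> k \<and> c \<in> set (dstk s ! (j - 1)) \<and> a \<in> set (inp s))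
       \<or> (c \<in> set (inp s) \<and> a \<in> set (inp s) \<and>
          (\<exists>i j. i < j \<and> j < length \<pi> \<and> \<pi> ! i = c \<and> \<pi> ! j = a))"
  shows "outp sf \<noteq> [1..<length \<pi> + 1]"
proof
  assume sorted_out: "outp sf = [1..<length \<pi> + 1]"
  have k: "0 < k"
    using assms(1) by simp
  have wf: "wf_state k \<pi> s"
    using assms(9) wf_state_init by (rule run_invariant) (rule wf_state_step[OF _ k])
  obtain s1 where s1: "step k k s = Some s1" and ops2: "run k ops2 s1 = Some sf"
    using assms(9,12) by (auto simp: run_append split: option.splits)
  have "a < c"
    using assms(7,8) by simp
  then have "precedes c a (pipeline s)"
    using precedes_pipeline_cases[OF wf assms(2) _ assms(13)] by simp
  then have start: "wf_state k \<pi> s1 \<and> b_ahead_of_a a b c s1"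
    using wf_state_step[OF s1 k wf] b_ahead_of_a_enter[OF s1 k wf assms(11)] assms(8) by simp
  from ops2 start have "wf_state k \<pi> sf \<and> b_ahead_of_a a b c sf"
    by (rule run_invariant) (use wf_state_step b_ahead_of_a_step k assms(2,7,8) in blast)
  moreover have "a \<in> set (outp sf)"
    using assms(3,4) sorted_out by auto
  ultimately show False
    using b_ahead_of_a_unsorted assms(2,7) sorted_out by (metis sorted_upt)
qed

end
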